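(* Let $\mathbb{X}$ be a real Banach space such that $\operatorname{Sm}\mathbb{X}$ is a dense $G_\delta$ subset of $\mathbb{X}$, and let $T:\mathbb{X}\to\mathbb{X}$ be a non-zero bounded linear operator. The following are equivalent: (i) $T$ preserves Birkhoff–James orthogonality at each point of $\operatorname{Sm}\mathbb{X}$; (ii) $T$ preserves Birkhoff–James orthogonality at each point of some dense subset $U$ of $\mathbb{X}$; (iii) $T$ preserves Birkhoff–James orthogonality at each point of some hyperplane $H$ not passing through the origin; (iv) $T$ preserves $\rho_+$-orthogonality at each point of $\operatorname{Sm}\mathbb{X}$; (v) $T$ preserves $\rho_-$-orthogonality at each point of $\operatorname{Sm}\mathbb{X}$; (vi) $T$ preserves $\rho$-orthogonality at each point of $\operatorname{Sm}\mathbb{X}$; (vii) $T$ is a scalar multiple of an isometry.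
   Context: $u\perp_B v$ means $\|u+\lambda v\|\ge\|u\|$ for all real $\lambda$; $T$ preserves Birkhoff–James orthogonality at $x$ if $x\perp_B v\Rightarrow Tx\perp_B Tv$ for all $v$. Norm derivatives: $\rho'_\pm(u,v)=\|u\|\lim_{t\to0^\pm}\frac{\|u+tv\|-\|u\|}{t}$ and $\rho'(u,v)=\frac12(\rho'_+(u,v)+\rho'_-(u,v))$. $u\perp_{\rho_\pm}v$ iff $\rho'_\pm(u,v)=0$, and $u\perp_\rho v$ iff $\rho'(u,v)=0$. $T$ preserves $\rho_\pm$- (resp. $\rho$-) orthogonality at $x$ if $x\perp_{\rho_\pm}v\Rightarrow Tx\perp_{\rho_\pm}Tv$ (resp. with $\rho$) for all $v$. For non-zero $z$, $J(z)=\{f\in\mathbb{X}^*:\|f\|=1,\ f(z)=\|z\|\}$; $z$ is smooth if $J(z)$ is a singleton; $\operatorname{Sm}\mathbb{X}$ is the set of smooth points. A hyperplane not passing through the origin is $\{x:\varphi(x)=c\}$ with $\varphi$ a non-zero bounded linear functional and $c\ne0$. Scalar multiple of an isometry: $\|Tx\|=\lambda\|x\|$ for all $x$, for a constant $\lambda$. *)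

theory Defs
  imports "HOL-Analysis.Analysis"
begin

definition bj_orth :: "'a::real_normed_vector \<Rightarrow> 'a \<Rightarrow> bool" where
  "bj_orth u v \<longleftrightarrow> (\<forall>l::real. norm (u + l *\<^sub>R v) \<ge> norm u)"

definition preserves_bj_at :: "('a::real_normed_vector \<Rightarrow> 'b::real_normed_vector) \<Rightarrow> 'a \<Rightarrow> bool" where
  "preserves_bj_at T x \<longleftrightarrow> (\<forall>v. bj_orth x v \<longrightarrow> bj_orth (T x) (T v))"

text \<open>Norm derivatives (the one-sided limits always exist by convexity of the norm).\<close>
definition rho_plus :: "'a::real_normed_vector \<Rightarrow> 'a \<Rightarrow> real" where
  "rho_plus u v = norm u * Lim (at_right 0) (\<lambda>t. (norm (u + t *\<^sub>R v) - norm u) / t)"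

definition rho_minus :: "'a::real_normed_vector \<Rightarrow> 'a \<Rightarrow> real" where
  "rho_minus u v = norm u * Lim (at_left 0) (\<lambda>t. (norm (u + t *\<^sub>R v) - norm u) / t)"

definition rho :: "'a::real_normed_vector \<Rightarrow> 'a \<Rightarrow> real" where
  "rho u v = (rho_plus u v + rho_minus u v) / 2"

definition preserves_rho_plus_at :: "('a::real_normed_vector \<Rightarrow> 'b::real_normed_vector) \<Rightarrow> 'a \<Rightarrow> bool" where
  "preserves_rho_plus_at T x \<longleftrightarrow> (\<forall>v. rho_plus x v = 0 \<longrightarrow> rho_plus (T x) (T v) = 0)"

definition preserves_rho_minus_at :: "('a::real_normed_vector \<Rightarrow> 'b::real_normed_vector) \<Rightarrow> 'a \<Rightarrow> bool" where
  "preserves_rho_minus_at T x \<longleftrightarrow> (\<forall>v. rho_minus x v = 0 \<longrightarrow> rho_minus (T x) (T v) = 0)"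

definition preserves_rho_at :: "('a::real_normed_vector \<Rightarrow> 'b::real_normed_vector) \<Rightarrow> 'a \<Rightarrow> bool" where
  "preserves_rho_at T x \<longleftrightarrow> (\<forall>v. rho x v = 0 \<longrightarrow> rho (T x) (T v) = 0)"

definition supp_funcs :: "'a::real_normed_vector \<Rightarrow> ('a \<Rightarrow> real) set" where
  "supp_funcs z = {f. bounded_linear f \<and> onorm f = 1 \<and> f z = norm z}"

definition smooth_points :: "'a::real_normed_vector set" where
  "smooth_points = {z. z \<noteq> 0 \<and> (\<exists>f. supp_funcs z = {f})}"

definition affine_hyperplane_off0 :: "'a::real_normed_vector set \<Rightarrow> bool" where
  "affine_hyperplane_off0 H \<longleftrightarrow>
     (\<exists>\<phi> c. bounded_linear \<phi> \<and> \<phi> \<noteq> (\<lambda>x. 0) \<and> c \<noteq> (0::real) \<and> H = {x. \<phi> x = c})"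

end

theory Submission
  imports Defs
begin

text \<open>
  At a smooth point \<open>x\<close> with supporting functional \<open>f\<close>, both one-sided derivatives of the norm
  at \<open>x\<close> in direction \<open>v\<close> equal \<open>f v\<close>, so BJ-orthogonality and the three kinds of
  \<open>\<rho>\<close>-orthogonality at \<open>x\<close> all mean \<open>f v = 0\<close>. Preservation on a dense set passes to smooth
  points because supporting functionals near a smooth point are close to \<open>f\<close> and
  BJ-orthogonality is a closed relation; a hyperplane off the origin gives the dense set of
  nonzero multiples of its points.

  The core is that preservation at smooth points makes \<open>T\<close> a scalar multiple of an isometry.
  If \<open>T\<close> preserves BJ-orthogonality at \<open>x\<close> and \<open>f\<close> supports \<open>x\<close>, then
  \<open>\<parallel>T x\<parallel> f y \<le> \<parallel>T y\<parallel> \<parallel>x\<parallel>\<close>, so the stretch \<open>\<parallel>T x\<parallel> / \<parallel>x\<parallel>\<close> drops from \<open>x\<close> to \<open>y\<close> by at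
  most a multiple of the defect \<open>\<parallel>y\<parallel> - \<parallel>x\<parallel> - f (y - x)\<close>. Along an arithmetic progression of
  smooth points these defects telescope to at most twice the step length, and Baire's theorem
  provides such progressions from points near \<open>x\<close> to points near \<open>y\<close> whenever the segment
  \<open>[x, y]\<close> avoids \<open>0\<close>. Hence the stretch is monotone along such segments, and so constant.
\<close>

section \<open>One-sided derivatives of the norm\<close>

definition norm_slope :: "'a::real_normed_vector \<Rightarrow> 'a \<Rightarrow> real \<Rightarrow> real" where
  "norm_slope u v t = (norm (u + t *\<^sub>R v) - norm u) / t"

text \<open>By convexity the slope is monotone in \<open>t\<close>, so these are the one-sided limits at \<open>0\<close>
  in the definitions of \<^const>\<open>rho_plus\<close> and \<^const>\<open>rho_minus\<close>.\<close>

definition norm_deriv_right :: "'a::real_normed_vector \<Rightarrow> 'a \<Rightarrow> real" where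
  "norm_deriv_right u v = Inf (norm_slope u v ` {0<..})"

definition norm_deriv_left :: "'a::real_normed_vector \<Rightarrow> 'a \<Rightarrow> real" where
  "norm_deriv_left u v = Sup (norm_slope u v ` {..<0})"

lemma convex_on_norm_line: "convex_on UNIV (\<lambda>t. norm (u + t *\<^sub>R v))"
proof (rule convex_onI)
  fix a s t :: real assume a: "0 < a" "a < 1"
  have "u + ((1 - a) *\<^sub>R s + a *\<^sub>R t) *\<^sub>R v = (1 - a) *\<^sub>R (u + s *\<^sub>R v) + a *\<^sub>R (u + t *\<^sub>R v)"
    by (simp add: algebra_simps)
  then show "norm (u + ((1 - a) *\<^sub>R s + a *\<^sub>R t) *\<^sub>R v)
      \<le> (1 - a) * norm (u + s *\<^sub>R v) + a * norm (u + t *\<^sub>R v)"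
    using a norm_triangle_ineq[of "(1 - a) *\<^sub>R (u + s *\<^sub>R v)" "a *\<^sub>R (u + t *\<^sub>R v)"] by simp
qed simp

lemma norm_slope_mono:
  assumes "s \<noteq> 0" "t \<noteq> 0" "s \<le> t"
  shows "norm_slope u v s \<le> norm_slope u v t"
proof -
  define \<phi> where "\<phi> t = norm (u + t *\<^sub>R v)" for t
  have \<phi>: "convex_on UNIV \<phi>" unfolding \<phi>_def by (rule convex_on_norm_line)
  have from_0: "norm_slope u v t = (\<phi> t - \<phi> 0) / (t - 0)"
    and to_0: "norm_slope u v t = (\<phi> 0 - \<phi> t) / (0 - t)" for t
    by (simp_all add: norm_slope_def \<phi>_def minus_divide_left del: divide_minus_left)
  consider "s = t" | "0 < s" "s < t" | "s < 0" "0 < t" | "t < 0" "s < t" using assms by linarith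
  then show ?thesis
  proof cases
    case 2
    then show ?thesis unfolding to_0 by (intro convex_on_slope_le(1)[OF \<phi>]) simp_all
  next
    case 3
    then have "norm_slope u v s \<le> (\<phi> s - \<phi> t) / (s - t)"
      unfolding from_0 by (intro convex_on_slope_le(1)[OF \<phi>]) simp_all
    also have "\<dots> \<le> norm_slope u v t"
      unfolding to_0 using 3 by (intro convex_on_slope_le(2)[OF \<phi>]) simp_all
    finally show ?thesis .
  next
    case 4
    then show ?thesis unfolding from_0 by (intro convex_on_slope_le(2)[OF \<phi>]) simp_all
  qed simp
qed

lemma norm_slope_bound: "\<bar>norm_slope u v t\<bar> \<le> norm v"
proof (cases "t = 0")
  case False
  have "\<bar>norm (u + t *\<^sub>R v) - norm u\<bar> \<le> \<bar>t\<bar> * norm v"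
    using norm_triangle_ineq3[of "u + t *\<^sub>R v" u] by simp
  with False show ?thesis by (simp add: norm_slope_def abs_divide divide_le_eq mult.commute)
qed (simp add: norm_slope_def)

lemma norm_slope_dist: "\<bar>norm_slope u v t - norm_slope x v t\<bar> \<le> 2 * norm (u - x) / \<bar>t\<bar>"
proof -
  have "\<bar>norm (u + t *\<^sub>R v) - norm (x + t *\<^sub>R v)\<bar> \<le> norm (u - x)"
    using norm_triangle_ineq3[of "u + t *\<^sub>R v" "x + t *\<^sub>R v"] by simp
  moreover have "\<bar>norm u - norm x\<bar> \<le> norm (u - x)" by (rule norm_triangle_ineq3)
  ultimately have "\<bar>(norm (u + t *\<^sub>R v) - norm (x + t *\<^sub>R v)) - (norm u - norm x)\<bar> \<le> 2 * norm (u - x)"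
    by linarith
  then show ?thesis
    by (simp add: norm_slope_def abs_divide diff_divide_distrib[symmetric] divide_right_mono)
qed

lemma bdd_below_norm_slope: "bdd_below (norm_slope u v ` A)"
proof (rule bdd_belowI2)
  fix t show "- norm v \<le> norm_slope u v t" using norm_slope_bound[of u v t] by linarith
qed

lemma bdd_above_norm_slope: "bdd_above (norm_slope u v ` A)"
proof (rule bdd_aboveI2)
  fix t show "norm_slope u v t \<le> norm v" using norm_slope_bound[of u v t] by linarith
qed

lemma norm_deriv_right_le: "0 < t \<Longrightarrow> norm_deriv_right u v \<le> norm_slope u v t"
  unfolding norm_deriv_right_def by (rule cInf_lower[OF _ bdd_below_norm_slope]) simp

lemma norm_deriv_left_ge: "s < 0 \<Longrightarrow> norm_slope u v s \<le> norm_deriv_left u v"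
  unfolding norm_deriv_left_def by (rule cSup_upper[OF _ bdd_above_norm_slope]) simp

lemma norm_deriv_left_le_right: "norm_deriv_left u v \<le> norm_deriv_right u v"
  unfolding norm_deriv_right_def norm_deriv_left_def
  by (intro cInf_greatest cSup_least) (auto intro: norm_slope_mono)

lemma norm_deriv_right_approx:
  assumes "0 < e" obtains t where "0 < t" "norm_slope u v t < norm_deriv_right u v + e"
  using cInf_lessD[of "norm_slope u v ` {0<..}"] assms by (force simp: norm_deriv_right_def)

lemma norm_deriv_left_approx:
  assumes "0 < e" obtains s where "s < 0" "norm_deriv_left u v - e < norm_slope u v s"
  using less_cSupD[of "norm_slope u v ` {..<0}"] assms by (force simp: norm_deriv_left_def)

lemma norm_slope_tendsto_right: "(norm_slope u v \<longlongrightarrow> norm_deriv_right u v) (at_right 0)"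
proof (rule order_tendstoI)
  fix a assume "a < norm_deriv_right u v"
  then have "a < norm_slope u v t" if "t \<in> {0<..<1}" for t
    using norm_deriv_right_le[of t u v] that by simp
  then show "\<forall>\<^sub>F t in at_right 0. a < norm_slope u v t"
    by (rule eventually_mono[OF eventually_at_right_real[OF zero_less_one]])
next
  fix a assume "norm_deriv_right u v < a"
  then obtain t0 where t0: "0 < t0" "norm_slope u v t0 < a"
    using norm_deriv_right_approx[of "a - norm_deriv_right u v" u v] by auto
  then have "norm_slope u v t < a" if "t \<in> {0<..<t0}" for t
    using norm_slope_mono[of t t0 u v] that by simp
  then show "\<forall>\<^sub>F t in at_right 0. norm_slope u v t < a"
    by (rule eventually_mono[OF eventually_at_right_real[OF t0(1)]])
qed

lemma norm_slope_tendsto_left: "(norm_slope u v \<longlongrightarrow> norm_deriv_left u v) (at_left 0)"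
proof (rule order_tendstoI)
  fix a assume "norm_deriv_left u v < a"
  then have "norm_slope u v t < a" if "t \<in> {-1<..<0}" for t
    using norm_deriv_left_ge[of t u v] that by simp
  moreover have "\<forall>\<^sub>F t in at_left 0. t \<in> {-1<..<(0::real)}"
    by (rule eventually_at_left_real) simp
  ultimately show "\<forall>\<^sub>F t in at_left 0. norm_slope u v t < a"
    by (simp add: eventually_mono)
next
  fix a assume "a < norm_deriv_left u v"
  then obtain s0 where s0: "s0 < 0" "a < norm_slope u v s0"
    using norm_deriv_left_approx[of "norm_deriv_left u v - a" u v] by auto
  then have "a < norm_slope u v t" if "t \<in> {s0<..<0}" for t
    using norm_slope_mono[of s0 t u v] that by simp
  then show "\<forall>\<^sub>F t in at_left 0. a < norm_slope u v t"
    by (rule eventually_mono[OF eventually_at_left_real[OF s0(1)]])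
qed

lemma rho_plus_eq: "rho_plus u v = norm u * norm_deriv_right u v"
proof -
  have "Lim (at_right 0) (norm_slope u v) = norm_deriv_right u v"
    by (rule tendsto_Lim[OF _ norm_slope_tendsto_right]) simp
  then show ?thesis unfolding rho_plus_def norm_slope_def[abs_def] by simp
qed

lemma rho_minus_eq: "rho_minus u v = norm u * norm_deriv_left u v"
proof -
  have "Lim (at_left 0) (norm_slope u v) = norm_deriv_left u v"
    by (rule tendsto_Lim[OF _ norm_slope_tendsto_left]) simp
  then show ?thesis unfolding rho_minus_def norm_slope_def[abs_def] by simp
qed

lemma bj_orth_iff_norm_derivs:
  "bj_orth u v \<longleftrightarrow> norm_deriv_left u v \<le> 0 \<and> 0 \<le> norm_deriv_right u v"
proof
  assume bj: "bj_orth u v"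
  have "0 \<le> norm_slope u v t" if "0 < t" for t
    using bj that by (simp add: bj_orth_def norm_slope_def)
  moreover have "norm_slope u v s \<le> 0" if "s < 0" for s
    using bj that by (simp add: bj_orth_def norm_slope_def divide_le_0_iff)
  ultimately show "norm_deriv_left u v \<le> 0 \<and> 0 \<le> norm_deriv_right u v"
    unfolding norm_deriv_left_def norm_deriv_right_def by (auto intro: cSup_least cInf_greatest)
next
  assume D: "norm_deriv_left u v \<le> 0 \<and> 0 \<le> norm_deriv_right u v"
  show "bj_orth u v" unfolding bj_orth_def
  proof
    fix l :: real
    consider "l = 0" | "0 < l" | "l < 0" by linarith
    then show "norm u \<le> norm (u + l *\<^sub>R v)"
    proof cases
      case 2
      then have "0 \<le> norm_slope u v l" using norm_deriv_right_le[OF 2, of u v] D by linarith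
      with 2 show ?thesis by (simp add: norm_slope_def zero_le_divide_iff)
    next
      case 3
      then have "norm_slope u v l \<le> 0" using norm_deriv_left_ge[OF 3, of u v] D by linarith
      with 3 show ?thesis by (simp add: norm_slope_def divide_le_0_iff)
    qed simp
  qed
qed

lemma rho_minus_le_rho_plus: "rho_minus u v \<le> rho_plus u v"
  by (simp add: rho_plus_eq rho_minus_eq mult_left_mono norm_deriv_left_le_right)

lemma bj_orth_if_rho_bounds:
  assumes "rho_minus u v \<le> 0" "0 \<le> rho_plus u v"
  shows "bj_orth u v"
proof (cases "u = 0")
  case True
  then show ?thesis by (simp add: bj_orth_def)
next
  case False
  with assms show ?thesis
    by (simp add: rho_plus_eq rho_minus_eq bj_orth_iff_norm_derivs mult_le_0_iff zero_le_mult_iff)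
qed

lemma bj_orth_if_rho_plus_eq_0: "rho_plus u v = 0 \<Longrightarrow> bj_orth u v"
  using rho_minus_le_rho_plus[of u v] by (intro bj_orth_if_rho_bounds) auto

lemma bj_orth_if_rho_minus_eq_0: "rho_minus u v = 0 \<Longrightarrow> bj_orth u v"
  using rho_minus_le_rho_plus[of u v] by (intro bj_orth_if_rho_bounds) auto

lemma bj_orth_if_rho_eq_0: "rho u v = 0 \<Longrightarrow> bj_orth u v"
  using rho_minus_le_rho_plus[of u v] by (intro bj_orth_if_rho_bounds) (auto simp: rho_def)

section \<open>Supporting functionals\<close>

lemma supp_funcsD:
  assumes "f \<in> supp_funcs z"
  shows "bounded_linear f" "\<bar>f y\<bar> \<le> norm y" "f z = norm z"
  using assms onorm[of f y] by (auto simp: supp_funcs_def)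

lemma supp_funcsI:
  assumes "linear h" "\<And>y. h y \<le> norm y" "h x = norm x" "x \<noteq> 0"
  shows "h \<in> supp_funcs x"
proof -
  have abs_le: "\<bar>h y\<bar> \<le> norm y" for y
    using assms(2)[of y] assms(2)[of "- y"] linear_neg[OF assms(1), of y] by simp
  then have bl: "bounded_linear h"
    using assms(1) by (intro bounded_linear_intro[where K=1]) (auto simp: linear_add linear_scale)
  have "onorm h \<le> 1" by (rule onorm_bound) (use abs_le in auto)
  moreover have "norm (h x) / norm x \<le> onorm h" by (rule le_onorm[OF bl])
  ultimately show ?thesis using bl assms(3,4) by (simp add: supp_funcs_def)
qed

lemma supp_func_le_norm_diff: "f \<in> supp_funcs z \<Longrightarrow> f (w - z) \<le> norm w - norm z"
  using supp_funcsD[of f z] linear_diff[OF bounded_linear.linear, of f w z] abs_le_D1 by fastforce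

lemma supp_func_ge_norm_diff: "f \<in> supp_funcs z \<Longrightarrow> norm z - norm w \<le> f (z - w)"
  using supp_funcsD[of f z] linear_diff[OF bounded_linear.linear, of f z w] abs_le_D1 by fastforce

lemma supp_func_bounds_norm_slope:
  assumes "f \<in> supp_funcs u"
  shows "0 < t \<Longrightarrow> f v \<le> norm_slope u v t" "t < 0 \<Longrightarrow> norm_slope u v t \<le> f v"
proof -
  interpret bounded_linear f using supp_funcsD(1)[OF assms] .
  have "f (u + t *\<^sub>R v) \<le> norm (u + t *\<^sub>R v)"
    using supp_funcsD(2)[OF assms] abs_le_D1 by blast
  then have "t * f v \<le> norm (u + t *\<^sub>R v) - norm u"
    using supp_funcsD(3)[OF assms] by (simp add: add scale)
  then show "0 < t \<Longrightarrow> f v \<le> norm_slope u v t" "t < 0 \<Longrightarrow> norm_slope u v t \<le> f v"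
    by (simp_all add: norm_slope_def le_divide_eq divide_le_eq mult.commute)
qed

lemma supp_func_between_norm_derivs:
  assumes "f \<in> supp_funcs u"
  shows "norm_deriv_left u v \<le> f v" "f v \<le> norm_deriv_right u v"
  using supp_func_bounds_norm_slope[OF assms, of _ v]
  by (auto simp: norm_deriv_left_def norm_deriv_right_def intro: cSup_least cInf_greatest)

lemma bj_orth_if_supp_func_eq_0: "f \<in> supp_funcs z \<Longrightarrow> f v = 0 \<Longrightarrow> bj_orth z v"
  using supp_func_between_norm_derivs[of f z v] by (simp add: bj_orth_iff_norm_derivs)

section \<open>Hahn--Banach extension dominated by the norm\<close>

text \<open>A subspace of \<open>'a \<times> real\<close> on which \<open>r \<le> norm y\<close> for all its elements \<open>(y, r)\<close> is the graph
  of a linear functional on a subspace of \<open>'a\<close> dominated by the norm.\<close>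

lemma dominated_graph_unique:
  fixes M :: "('a::real_normed_vector \<times> real) set"
  assumes "subspace M" "\<forall>(y, r)\<in>M. r \<le> norm y" "(y, r) \<in> M" "(y, s) \<in> M"
  shows "r = s"
proof -
  have "(0, r - s) \<in> M" "(0, s - r) \<in> M"
    using subspace_diff[OF assms(1) assms(3) assms(4)] subspace_diff[OF assms(1) assms(4) assms(3)]
    by simp_all
  then have "r - s \<le> norm (0::'a)" "s - r \<le> norm (0::'a)" using assms(2) by auto
  then show ?thesis by simp
qed

lemma dominated_graph_separation:
  fixes M :: "('a::real_normed_vector \<times> real) set"
  assumes sub: "subspace M" and dom: "\<forall>(y, r)\<in>M. r \<le> norm y"
  shows "\<exists>c. (\<forall>(y, r)\<in>M. r - norm (y - p) \<le> c) \<and> (\<forall>(z, s)\<in>M. c \<le> norm (z + p) - s)"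
proof -
  define B where "B = (\<lambda>(y, r). r - norm (y - p)) ` M"
  have sep: "b \<le> norm (z + p) - s" if zs: "(z, s) \<in> M" and "b \<in> B" for z s b
  proof -
    obtain y r where yr: "(y, r) \<in> M" "b = r - norm (y - p)" using \<open>b \<in> B\<close> by (auto simp: B_def)
    have "(y + z, r + s) \<in> M" using subspace_add[OF sub yr(1) zs] by simp
    then have "r + s \<le> norm ((y - p) + (z + p))" using dom by auto
    also have "\<dots> \<le> norm (y - p) + norm (z + p)" by (rule norm_triangle_ineq)
    finally show ?thesis using yr(2) by simp
  qed
  have "(0, 0) \<in> M" using subspace_0[OF sub] by (simp add: zero_prod_def)
  then have B: "B \<noteq> {}" "bdd_above B" using sep[of 0 0] by (auto simp: B_def bdd_above_def)
  have "r - norm (y - p) \<le> Sup B" if "(y, r) \<in> M" for y r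
    using that B(2) by (intro cSup_upper) (force simp: B_def)
  moreover have "Sup B \<le> norm (z + p) - s" if "(z, s) \<in> M" for z s
    using B(1) sep[OF that] by (rule cSup_least)
  ultimately show ?thesis by (intro exI[of _ "Sup B"]) auto
qed

lemma dominated_graph_extend:
  fixes M :: "('a::real_normed_vector \<times> real) set"
  assumes sub: "subspace M" and dom: "\<forall>(y, r)\<in>M. r \<le> norm y"
  obtains c where "\<forall>(y, r)\<in>span (insert (p, c) M). r \<le> norm y"
proof -
  from dominated_graph_separation[OF sub dom, of p]
  obtain c where c: "\<forall>(y, r)\<in>M. r - norm (y - p) \<le> c" "\<forall>(z, s)\<in>M. c \<le> norm (z + p) - s"
    by (elim exE conjE)
  have above: "r - norm (y - p) \<le> c" and below: "c \<le> norm (y + p) - r" if "(y, r) \<in> M" for y r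
    using bspec[OF c(1) that] bspec[OF c(2) that] by simp_all
  have scaled: "(a *\<^sub>R y, a * r) \<in> M" if "(y, r) \<in> M" for a y r
    using subspace_scale[OF sub that, of a] by simp
  have "r \<le> norm y" if yr: "(y, r) \<in> span (insert (p, c) M)" for y r
  proof -
    obtain k where "(y, r) - k *\<^sub>R (p, c) \<in> M"
      using yr span_breakdown_eq span_eq_iff[THEN iffD2, OF sub] by blast
    then obtain m s where ms: "(m, s) \<in> M" "y = m + k *\<^sub>R p" "r = s + k * c" by auto
    consider "k = 0" | "0 < k" | "k < 0" by linarith
    then show "r \<le> norm y"
    proof cases
      case 1
      then show ?thesis using dom ms by auto
    next
      case 2
      have "k * c \<le> k * (norm ((1 / k) *\<^sub>R m + p) - (1 / k) * s)"
        using below[OF scaled[OF ms(1), of "1 / k"]] 2 by (simp add: mult_left_mono)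
      also have "\<dots> = norm (k *\<^sub>R ((1 / k) *\<^sub>R m + p)) - s"
        using 2 by (simp add: right_diff_distrib)
      finally show ?thesis using 2 ms by (simp add: scaleR_add_right)
    next
      case 3
      define j where "j = - k"
      have j: "0 < j" using 3 by (simp add: j_def)
      have "j * ((1 / j) * s - norm ((1 / j) *\<^sub>R m - p)) \<le> j * c"
        using above[OF scaled[OF ms(1), of "1 / j"]] j by (simp add: mult_left_mono)
      then have "s - norm (j *\<^sub>R ((1 / j) *\<^sub>R m - p)) \<le> j * c"
        using j by (simp add: right_diff_distrib)
      moreover have "j *\<^sub>R ((1 / j) *\<^sub>R m - p) = m + k *\<^sub>R p"
        using j by (simp add: scaleR_diff_right j_def)
      ultimately have "s - norm (m + k *\<^sub>R p) \<le> j * c" by simp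
      then show ?thesis using ms by (simp add: j_def)
    qed
  qed
  then have "\<forall>(y, r)\<in>span (insert (p, c) M). r \<le> norm y" by auto
  then show ?thesis by (rule that)
qed

lemma subspace_Union_chain:
  assumes "C \<noteq> {}" "subset.chain {M. subspace M} C"
  shows "subspace (\<Union>C)"
  unfolding subspace_def
proof (intro conjI ballI allI)
  have sub: "\<And>M. M \<in> C \<Longrightarrow> subspace M" and ch: "\<And>M N. M \<in> C \<Longrightarrow> N \<in> C \<Longrightarrow> M \<subseteq> N \<or> N \<subseteq> M"
    using assms(2) by (auto simp: subset_chain_def)
  show "0 \<in> \<Union>C" using assms(1) sub subspace_0 by blast
  show "x + y \<in> \<Union>C" if xy: "x \<in> \<Union>C" "y \<in> \<Union>C" for x y
  proof -
    obtain M N where "M \<in> C" "N \<in> C" "x \<in> M" "y \<in> N" using xy by blast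
    then show ?thesis using ch[of M N] sub subspace_add by blast
  qed
  show "c *\<^sub>R x \<in> \<Union>C" if "x \<in> \<Union>C" for c x
    using that sub subspace_scale by blast
qed

theorem norm_dominated_extension:
  fixes G :: "('a::real_normed_vector \<times> real) set"
  assumes "subspace G" "\<forall>(y, r)\<in>G. r \<le> norm y"
  obtains h where "linear h" "\<And>y. h y \<le> norm y" "\<And>y r. (y, r) \<in> G \<Longrightarrow> h y = r"
proof -
  define A where "A = {M. subspace M \<and> G \<subseteq> M \<and> (\<forall>(y, r)\<in>M. r \<le> norm y)}"
  have "\<exists>M\<in>A. \<forall>N\<in>A. M \<subseteq> N \<longrightarrow> N = M"
  proof (rule subset_Zorn_nonempty)
    show "A \<noteq> {}" using assms by (auto simp: A_def)
    fix C assume C: "C \<noteq> {}" "subset.chain A C"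
    then have "subset.chain {M. subspace M} C" by (auto simp: A_def subset_chain_def)
    then show "\<Union>C \<in> A" using C subspace_Union_chain by (auto simp: A_def subset_chain_def)
  qed
  then obtain M where "M \<in> A" and max: "\<And>N. N \<in> A \<Longrightarrow> M \<subseteq> N \<Longrightarrow> N = M" by blast
  then have M: "subspace M" "G \<subseteq> M" "\<forall>(y, r)\<in>M. r \<le> norm y" by (auto simp: A_def)
  have total: "\<exists>r. (y, r) \<in> M" for y
  proof -
    obtain c where c: "\<forall>(z, r)\<in>span (insert (y, c) M). r \<le> norm z"
      using dominated_graph_extend[OF M(1,3)] .
    have sup: "insert (y, c) M \<subseteq> span (insert (y, c) M)" by (rule span_superset)
    then have "span (insert (y, c) M) \<in> A" using M(2) c by (auto simp: A_def)
    then have "span (insert (y, c) M) = M" using max sup by blast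
    then show ?thesis using sup by blast
  qed
  define h where "h y = (SOME r. (y, r) \<in> M)" for y
  have hM: "(y, h y) \<in> M" for y unfolding h_def using total by (rule someI_ex)
  have unique: "(y, r) \<in> M \<Longrightarrow> h y = r" for y r
    using dominated_graph_unique[OF M(1,3) hM] .
  show thesis
  proof
    show "linear h"
    proof
      show "h (x + y) = h x + h y" for x y
        using unique subspace_add[OF M(1) hM hM] by simp
      show "h (c *\<^sub>R x) = c *\<^sub>R h x" for c x
        using unique subspace_scale[OF M(1) hM] by simp
    qed
    show "h y \<le> norm y" for y using M(3) hM by blast
    show "h y = r" if "(y, r) \<in> G" for y r using unique M(2) that by blast
  qed
qed

lemma norm_line_ge_if_between_norm_derivs:
  assumes "norm_deriv_left x v \<le> c" "c \<le> norm_deriv_right x v"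
  shows "norm x + t * c \<le> norm (x + t *\<^sub>R v)"
proof -
  consider "t = 0" | "0 < t" | "t < 0" by linarith
  then show ?thesis
  proof cases
    case 2
    then have "c \<le> norm_slope x v t" using norm_deriv_right_le[OF 2, of x v] assms by linarith
    with 2 show ?thesis by (simp add: norm_slope_def le_divide_eq mult.commute)
  next
    case 3
    then have "norm_slope x v t \<le> c" using norm_deriv_left_ge[OF 3, of x v] assms by linarith
    with 3 show ?thesis by (simp add: norm_slope_def divide_le_eq mult.commute)
  qed simp
qed

lemma norm_plane_ge_if_norm_line_ge:
  assumes line: "\<And>t. norm x + t * c \<le> norm (x + t *\<^sub>R v)"
  shows "a * norm x + b * c \<le> norm (a *\<^sub>R x + b *\<^sub>R v)"
proof (cases "0 < a")
  case True
  have "a * (norm x + (b / a) * c) \<le> a * norm (x + (b / a) *\<^sub>R v)"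
    using line[of "b / a"] True by (simp add: mult_left_mono)
  moreover have "a *\<^sub>R (x + (b / a) *\<^sub>R v) = a *\<^sub>R x + b *\<^sub>R v" using True by (simp add: algebra_simps)
  then have "a * norm (x + (b / a) *\<^sub>R v) = norm (a *\<^sub>R x + b *\<^sub>R v)"
    using True by (metis abs_of_pos norm_scaleR)
  ultimately show ?thesis using True by (simp add: algebra_simps)
next
  case False
  have "\<bar>c\<bar> \<le> norm v"
    using line[of 1] line[of "-1"] norm_triangle_ineq[of x v] norm_triangle_ineq[of x "- v"] by auto
  have "b * c \<le> \<bar>b\<bar> * \<bar>c\<bar>" by (metis abs_ge_self abs_mult)
  also have "\<dots> \<le> \<bar>b\<bar> * norm v" using \<open>\<bar>c\<bar> \<le> norm v\<close> by (simp add: mult_left_mono)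
  finally have "b * c \<le> norm (b *\<^sub>R v)" by simp
  moreover have "norm (b *\<^sub>R v) \<le> norm (a *\<^sub>R x + b *\<^sub>R v) + norm (a *\<^sub>R x)"
    using norm_triangle_ineq4[of "a *\<^sub>R x + b *\<^sub>R v" "a *\<^sub>R x"] by simp
  ultimately show ?thesis using False by simp
qed

lemma supp_funcs_value:
  assumes "x \<noteq> 0" "norm_deriv_left x v \<le> c" "c \<le> norm_deriv_right x v"
  obtains f where "f \<in> supp_funcs x" "f v = c"
proof -
  define g where "g = (\<lambda>(a::real, b::real). (a *\<^sub>R x + b *\<^sub>R v, a * norm x + b * c))"
  have "linear g" by (rule linearI) (auto simp: g_def algebra_simps)
  then have "subspace (range g)" by (rule linear_subspace_image[OF _ subspace_UNIV])
  moreover have "\<forall>(y, r)\<in>range g. r \<le> norm y"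
    using norm_plane_ge_if_norm_line_ge[OF norm_line_ge_if_between_norm_derivs[OF assms(2,3)]]
    by (auto simp: g_def)
  ultimately obtain h where h: "linear h" "\<And>y. h y \<le> norm y" "\<And>y r. (y, r) \<in> range g \<Longrightarrow> h y = r"
    using norm_dominated_extension by blast
  have "(x, norm x) = g (1, 0)" "(v, c) = g (0, 1)" by (simp_all add: g_def)
  then have "h x = norm x" "h v = c" using h(3) by (metis rangeI)+
  then show ?thesis using that supp_funcsI[OF h(1,2) _ assms(1)] by blast
qed

lemma supp_funcs_nonempty:
  assumes "x \<noteq> 0" obtains f where "f \<in> supp_funcs x"
proof -
  have "bj_orth x 0" by (simp add: bj_orth_def)
  then show ?thesis
    using supp_funcs_value[OF assms, of 0 0] that by (auto simp: bj_orth_iff_norm_derivs)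
qed

lemma smooth_point_norm_derivs:
  assumes "x \<in> smooth_points" "f \<in> supp_funcs x"
  shows "norm_deriv_right x v = f v" "norm_deriv_left x v = f v"
proof -
  obtain g where x: "x \<noteq> 0" and g: "supp_funcs x = {g}"
    using assms(1) by (auto simp: smooth_points_def)
  obtain f' where "f' \<in> supp_funcs x" "f' v = norm_deriv_right x v"
    using supp_funcs_value[OF x norm_deriv_left_le_right order_refl] .
  then show "norm_deriv_right x v = f v" using assms(2) g by auto
  obtain f'' where "f'' \<in> supp_funcs x" "f'' v = norm_deriv_left x v"
    using supp_funcs_value[OF x order_refl norm_deriv_left_le_right] .
  then show "norm_deriv_left x v = f v" using assms(2) g by auto
qed

lemma smooth_point_bj_orth_iff:
  assumes "x \<in> smooth_points" "f \<in> supp_funcs x"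
  shows "bj_orth x v \<longleftrightarrow> f v = 0"
  using smooth_point_norm_derivs[OF assms] by (auto simp: bj_orth_iff_norm_derivs)

lemma smooth_point_bj_orth_iff_rho:
  assumes "x \<in> smooth_points"
  shows "bj_orth x v \<longleftrightarrow> rho_plus x v = 0" "bj_orth x v \<longleftrightarrow> rho_minus x v = 0"
    "bj_orth x v \<longleftrightarrow> rho x v = 0"
proof -
  have x: "x \<noteq> 0" using assms by (simp add: smooth_points_def)
  then obtain f where f: "f \<in> supp_funcs x" by (rule supp_funcs_nonempty)
  show "bj_orth x v \<longleftrightarrow> rho_plus x v = 0" "bj_orth x v \<longleftrightarrow> rho_minus x v = 0"
    "bj_orth x v \<longleftrightarrow> rho x v = 0"
    using x smooth_point_norm_derivs[OF assms f] smooth_point_bj_orth_iff[OF assms f]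
    by (simp_all add: rho_def rho_plus_eq rho_minus_eq)
qed

lemma preserves_bj_at_smooth_point_if_preserves_rho:
  assumes "x \<in> smooth_points"
  shows "preserves_rho_plus_at T x \<Longrightarrow> preserves_bj_at T x"
    "preserves_rho_minus_at T x \<Longrightarrow> preserves_bj_at T x"
    "preserves_rho_at T x \<Longrightarrow> preserves_bj_at T x"
  using smooth_point_bj_orth_iff_rho[OF assms]
    bj_orth_if_rho_plus_eq_0 bj_orth_if_rho_minus_eq_0 bj_orth_if_rho_eq_0
  unfolding preserves_bj_at_def preserves_rho_plus_at_def preserves_rho_minus_at_def
    preserves_rho_at_def
  by blast+

section \<open>Scalar multiples of isometries\<close>

lemma norm_derivs_scalar_isometry:
  assumes "linear T" "\<And>x. norm (T x) = c * norm x"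
  shows "norm_deriv_right (T x) (T v) = c * norm_deriv_right x v"
    "norm_deriv_left (T x) (T v) = c * norm_deriv_left x v"
proof -
  have "T x + t *\<^sub>R T v = T (x + t *\<^sub>R v)" for t
    using assms(1) by (simp add: linear_add linear_scale)
  then have slope: "norm_slope (T x) (T v) = (\<lambda>t. c * norm_slope x v t)"
    using assms(2) by (simp add: fun_eq_iff norm_slope_def algebra_simps)
  show "norm_deriv_right (T x) (T v) = c * norm_deriv_right x v"
    using norm_slope_tendsto_right[of "T x" "T v"] tendsto_mult_left[OF norm_slope_tendsto_right]
    unfolding slope by (rule tendsto_unique[rotated]) simp
  show "norm_deriv_left (T x) (T v) = c * norm_deriv_left x v"
    using norm_slope_tendsto_left[of "T x" "T v"] tendsto_mult_left[OF norm_slope_tendsto_left]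
    unfolding slope by (rule tendsto_unique[rotated]) simp
qed

lemma rho_scalar_isometry:
  assumes "linear T" "\<And>x. norm (T x) = c * norm x"
  shows "rho_plus (T x) (T v) = c * c * rho_plus x v"
    "rho_minus (T x) (T v) = c * c * rho_minus x v"
    "rho (T x) (T v) = c * c * rho x v"
  using norm_derivs_scalar_isometry[OF assms] assms(2)
  by (simp_all add: rho_def rho_plus_eq rho_minus_eq algebra_simps)

lemma preserves_bj_at_scalar_isometry:
  assumes "linear T" "\<And>x. norm (T x) = c * norm x" "0 \<le> c"
  shows "preserves_bj_at T x"
  unfolding preserves_bj_at_def bj_orth_def
proof (intro allI impI)
  fix v l assume "\<forall>l. norm x \<le> norm (x + l *\<^sub>R v)"
  moreover have "T x + l *\<^sub>R T v = T (x + l *\<^sub>R v)"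
    using assms(1) by (simp add: linear_add linear_scale)
  ultimately show "norm (T x) \<le> norm (T x + l *\<^sub>R T v)"
    using assms(2,3) by (simp add: mult_left_mono)
qed

lemma scalar_isometry_nonneg:
  assumes "T \<noteq> (\<lambda>x. 0)" "\<And>x. norm (T x) = c * norm x"
  shows "0 \<le> c"
proof -
  obtain z where "T z \<noteq> 0" using assms(1) by auto
  then have "0 < c * norm z" using assms(2) by (metis zero_less_norm_iff)
  then show ?thesis by (simp add: zero_less_mult_iff)
qed

lemma preserves_rho_at_scalar_isometry:
  assumes "linear T" "\<And>x. norm (T x) = c * norm x"
  shows "preserves_rho_plus_at T x" "preserves_rho_minus_at T x" "preserves_rho_at T x"
  using rho_scalar_isometry[OF assms]
  by (simp_all add: preserves_rho_plus_at_def preserves_rho_minus_at_def preserves_rho_at_def)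

section \<open>Preservation at smooth points forces a scalar multiple of an isometry\<close>

definition stretch :: "('a::real_normed_vector \<Rightarrow> 'b::real_normed_vector) \<Rightarrow> 'a \<Rightarrow> real" where
  "stretch T x = norm (T x) / norm x"

lemma stretch_scaleR: "linear T \<Longrightarrow> a \<noteq> 0 \<Longrightarrow> stretch T (a *\<^sub>R x) = stretch T x"
  by (simp add: stretch_def linear_scale)

lemma stretch_le_onorm: "bounded_linear T \<Longrightarrow> stretch T x \<le> onorm T"
  unfolding stretch_def by (rule le_onorm)

lemma continuous_at_stretch: "bounded_linear T \<Longrightarrow> x \<noteq> 0 \<Longrightarrow> continuous (at x) (stretch T)"
  unfolding stretch_def[abs_def] by (intro continuous_intros linear_continuous_at) auto

lemma supp_func_mult_le_if_preserves_bj: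
  assumes "linear T" "preserves_bj_at T x" "f \<in> supp_funcs x"
  shows "norm (T x) * f y \<le> norm (T y) * norm x"
proof (cases "x = 0 \<or> f y = 0")
  case True
  then show ?thesis using linear_0[OF assms(1)] by auto
next
  case False
  interpret f: bounded_linear f using supp_funcsD(1)[OF assms(3)] .
  define a where "a = f y / norm x"
  have a: "a \<noteq> 0" using False by (simp add: a_def)
  have "f (y - a *\<^sub>R x) = 0"
    using False supp_funcsD(3)[OF assms(3)] by (simp add: a_def f.diff f.scale)
  then have "bj_orth (T x) (T (y - a *\<^sub>R x))"
    using assms(2,3) bj_orth_if_supp_func_eq_0 by (auto simp: preserves_bj_at_def)
  then have "norm (T x) \<le> norm (T x + (1 / a) *\<^sub>R T (y - a *\<^sub>R x))" by (simp add: bj_orth_def)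
  also have "T x + (1 / a) *\<^sub>R T (y - a *\<^sub>R x) = (1 / a) *\<^sub>R T y"
    using a assms(1) by (simp add: linear_diff linear_scale algebra_simps)
  finally have "\<bar>a\<bar> * norm (T x) \<le> norm (T y)" using a by (simp add: field_simps)
  then have "a * norm (T x) \<le> norm (T y)"
    using mult_right_mono[OF abs_ge_self norm_ge_zero, of a "T x"] by linarith
  then have "a * norm (T x) * norm x \<le> norm (T y) * norm x" by (simp add: mult_right_mono)
  then show ?thesis using False by (simp add: a_def mult.commute)
qed

lemma stretch_step:
  assumes T: "bounded_linear T" and pres: "preserves_bj_at T x" and f: "f \<in> supp_funcs x"
    and x: "x \<noteq> 0" and m: "0 < m" "m \<le> norm y"
  shows "stretch T x - onorm T / m * (norm y - norm x - f (y - x)) \<le> stretch T y"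
proof -
  interpret f: bounded_linear f using supp_funcsD(1)[OF f] .
  define e where "e = norm y - norm x - f (y - x)"
  have fy: "f y = norm x + f (y - x)" using supp_funcsD(3)[OF f] by (simp add: f.diff)
  have e: "0 \<le> e" using supp_func_le_norm_diff[OF f, of y] by (simp add: e_def)
  have y: "0 < norm y" using m by linarith
  have "norm (T x) * f y \<le> norm (T y) * norm x"
    using supp_func_mult_le_if_preserves_bj[OF bounded_linear.linear[OF T] pres f] .
  then have "stretch T x * (norm y - e) \<le> norm (T y)"
    using x by (simp add: stretch_def e_def fy field_simps)
  then have "stretch T x * (norm y - e) / norm y \<le> stretch T y"
    unfolding stretch_def[of T y] by (rule divide_right_mono) simp
  moreover have "stretch T x * (norm y - e) / norm y = stretch T x - stretch T x * e / norm y"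
    using y by (simp add: field_simps)
  moreover have "stretch T x * e / norm y \<le> onorm T * e / m"
    using stretch_le_onorm[OF T, of x] onorm_pos_le[OF T] e m y
    by (intro frac_le mult_mono) (auto simp: stretch_def)
  ultimately show ?thesis by (simp add: e_def)
qed

lemma stretch_progression:
  assumes T: "bounded_linear T" and pres: "\<forall>i<n. preserves_bj_at T (p + real i *\<^sub>R d)"
    and m: "0 < m" "\<forall>i\<le>n. m \<le> norm (p + real i *\<^sub>R d)"
  shows "stretch T p - 2 * (onorm T / m) * norm d \<le> stretch T (p + real n *\<^sub>R d)"
proof -
  define q where "q i = p + real i *\<^sub>R d" for i
  define C where "C = onorm T / m"
  have C: "0 \<le> C" using onorm_pos_le[OF T] m(1) by (simp add: C_def)
  have q_diff: "q (Suc i) - q i = d" for i by (simp add: q_def algebra_simps)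
  have q_norm: "m \<le> norm (q i)" if "i \<le> n" for i using m(2) that by (simp add: q_def)
  have q_pres: "preserves_bj_at T (q i)" "q i \<noteq> 0" if "i < n" for i
    using pres q_norm[of i] m(1) that by (auto simp: q_def)
  then have "\<forall>i<n. \<exists>f. f \<in> supp_funcs (q i)" by (metis supp_funcs_nonempty)
  then obtain F where F: "\<And>i. i < n \<Longrightarrow> F i \<in> supp_funcs (q i)" by metis
  have step: "stretch T (q i) - C * (norm (q (Suc i)) - norm (q i) - F i d) \<le> stretch T (q (Suc i))"
    if "i < n" for i
    using stretch_step[OF T q_pres(1)[OF that] F[OF that] q_pres(2)[OF that] m(1) q_norm[of "Suc i"]]
      q_diff[of i] that
    by (simp add: C_def)
  \<comment> \<open>the defect of each step is paid back by the functional at the next point\<close>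
  have supp_lower: "norm (q (Suc i)) - norm (q i) \<le> F (Suc i) d" if "Suc i < n" for i
    using supp_func_ge_norm_diff[OF F[OF that], of "q i"] q_diff[of i] by simp
  have inv: "stretch T p - C * norm d \<le> stretch T (q (Suc k)) + C * (norm (q (Suc k)) - norm (q k))"
    if "k < n" for k
    using that
  proof (induction k)
    case 0
    have "C * (- F 0 d) \<le> C * norm d"
      using supp_funcsD(2)[OF F[OF 0], of d] C by (intro mult_left_mono) auto
    then show ?case using step[OF 0] by (simp add: q_def algebra_simps)
  next
    case (Suc k)
    have "C * (- F (Suc k) d) \<le> C * (norm (q k) - norm (q (Suc k)))"
      using supp_lower[OF Suc.prems] C by (intro mult_left_mono) auto
    then show ?case using Suc step[OF Suc.prems] by (simp add: algebra_simps)
  qed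
  show ?thesis
  proof (cases n)
    case 0
    then show ?thesis using C by (simp add: C_def[symmetric])
  next
    case (Suc k)
    have "norm (q (Suc k)) - norm (q k) \<le> norm d"
      using norm_triangle_ineq2[of "q (Suc k)" "q k"] q_diff[of k] by simp
    then have "C * (norm (q (Suc k)) - norm (q k)) \<le> C * norm d" using C by (rule mult_left_mono)
    then show ?thesis using inv[of k] Suc by (simp add: q_def C_def)
  qed
qed

lemma dense_gdelta_translates_Inter:
  fixes S :: "'a::banach set"
  assumes "gdelta_in euclidean S" "closure S = UNIV" "countable A"
  shows "closure (\<Inter>a\<in>A. (\<lambda>p. p + a) -` S) = UNIV"
proof -
  obtain \<U> where \<U>: "countable \<U>" "\<U> \<subseteq> Collect (openin euclidean)" "\<Inter>\<U> = S"
    using assms(1) unfolding gdelta_in_alt intersection_of_def by blast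
  define \<V> where "\<V> = (\<lambda>(a, U). (\<lambda>p. p + a) -` U) ` (A \<times> \<U>)"
  have "countable \<V>" unfolding \<V>_def by (intro countable_image countable_SIGMA assms(3) \<U>(1))
  moreover have "openin euclidean V \<and> euclidean closure_of V = topspace euclidean"
    if V_in: "V \<in> \<V>" for V
  proof -
    obtain a U where U: "U \<in> \<U>" and V: "V = (\<lambda>p. p + a) -` U" using V_in by (auto simp: \<V>_def)
    have "open U" using U \<U>(2) by auto
    then have "open V" unfolding V by (intro continuous_open_vimage continuous_intros)
    moreover have "(\<lambda>p. p - a) ` S \<subseteq> V" using U \<U>(3) by (auto simp: V)
    then have "closure ((\<lambda>p. p - a) ` S) \<subseteq> closure V" by (rule closure_mono)
    moreover have "(\<lambda>p. p - a) ` UNIV = UNIV" by (metis surj_def add_diff_cancel)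
    then have "closure ((\<lambda>p. p - a) ` S) = UNIV" by (simp add: closure_translation_subtract assms(2))
    ultimately show ?thesis by auto
  qed
  ultimately have "euclidean closure_of \<Inter>\<V> = topspace euclidean"
    by (intro Baire_category) (auto simp: completely_metrizable_space_euclidean)
  moreover have "\<Inter>\<V> = (\<Inter>a\<in>A. (\<lambda>p. p + a) -` S)" using \<U>(3) by (auto simp: \<V>_def)
  ultimately show ?thesis by (simp only: euclidean_closure_of topspace_euclidean)
qed

lemma norm_bounded_below_near_segment:
  assumes "0 \<notin> closed_segment x y"
  obtains m where "0 < m" "\<And>p u. dist p x < m \<Longrightarrow> 0 \<le> u \<Longrightarrow> u \<le> 1 \<Longrightarrow> m \<le> norm (p + u *\<^sub>R (y - x))"
proof -
  obtain z where z: "z \<in> closed_segment x y" "\<And>w. w \<in> closed_segment x y \<Longrightarrow> norm z \<le> norm w"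
    using continuous_attains_inf[of "closed_segment x y" norm] by (auto intro: continuous_intros)
  show ?thesis
  proof (rule that)
    show "0 < norm z / 2" using z(1) assms by auto
    fix p and u :: real assume p: "dist p x < norm z / 2" and u: "0 \<le> u" "u \<le> 1"
    have "x + u *\<^sub>R (y - x) \<in> closed_segment x y"
      using u unfolding in_segment by (intro exI[of _ u]) (simp add: algebra_simps)
    then have "norm z \<le> norm (x + u *\<^sub>R (y - x))" by (rule z(2))
    also have "\<dots> \<le> norm (p + u *\<^sub>R (y - x)) + norm (p - x)"
      using norm_triangle_ineq4[of "p + u *\<^sub>R (y - x)" "p - x"] by (simp add: algebra_simps)
    finally show "norm z / 2 \<le> norm (p + u *\<^sub>R (y - x))" using p by (simp add: dist_norm)
  qed
qed

lemma stretch_almost_increasing: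
  fixes T :: "'a::banach \<Rightarrow> 'b::real_normed_vector"
  assumes T: "bounded_linear T" and S: "gdelta_in euclidean S" "closure S = UNIV"
    and pres: "\<forall>z\<in>S. preserves_bj_at T z" and seg: "0 \<notin> closed_segment x y" and e: "0 < e"
  obtains p where "dist p x < e" "stretch T p - e \<le> stretch T (p + (y - x))"
proof -
  obtain m where m: "0 < m"
    "\<And>p u. dist p x < m \<Longrightarrow> 0 \<le> u \<Longrightarrow> u \<le> 1 \<Longrightarrow> m \<le> norm (p + u *\<^sub>R (y - x))"
    using norm_bounded_below_near_segment[OF seg] by blast
  define C where "C = onorm T / m"
  obtain N :: nat where N: "2 * C * norm (y - x) / e < real N" using reals_Archimedean2 by blast
  define n where "n = Suc N"
  define d where "d = (1 / real n) *\<^sub>R (y - x)"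
  have n: "0 < real n" by (simp add: n_def)
  define P where "P = (\<Inter>a\<in>(\<lambda>i. real i *\<^sub>R d) ` {..<n}. (\<lambda>p. p + a) -` S)"
  have "closure P = UNIV" unfolding P_def using S by (intro dense_gdelta_translates_Inter) auto
  then have "x \<in> closure P" by simp
  moreover have "0 < min e m" using e m by simp
  ultimately obtain p where "p \<in> P" and p: "dist p x < min e m"
    unfolding closure_approachable by blast
  have "m \<le> norm (p + real i *\<^sub>R d)" if "i \<le> n" for i
    using m(2)[of p "real i / real n"] p that n by (simp add: d_def)
  moreover have "\<forall>i<n. preserves_bj_at T (p + real i *\<^sub>R d)"
    using \<open>p \<in> P\<close> pres by (auto simp: P_def)
  ultimately have "stretch T p - 2 * C * norm d \<le> stretch T (p + real n *\<^sub>R d)"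
    using stretch_progression[OF T _ m(1)] by (simp add: C_def)
  moreover have "p + real n *\<^sub>R d = p + (y - x)" using n by (simp add: d_def)
  moreover have "norm (y - x) = real n * norm d" unfolding d_def norm_scaleR using n by simp
  then have "real n * (2 * C * norm d) < real n * e"
    using N e by (simp add: n_def divide_less_eq algebra_simps)
  then have "2 * C * norm d < e" using n by simp
  ultimately show ?thesis using that p by fastforce
qed

lemma stretch_mono_on_segment:
  fixes T :: "'a::banach \<Rightarrow> 'b::real_normed_vector"
  assumes T: "bounded_linear T" and S: "gdelta_in euclidean S" "closure S = UNIV"
    and pres: "\<forall>z\<in>S. preserves_bj_at T z" and seg: "0 \<notin> closed_segment x y"
  shows "stretch T x \<le> stretch T y"
proof (rule field_le_epsilon)
  fix e :: real assume "0 < e"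
  then have e: "0 < e / 3" by simp
  have "x \<noteq> 0" "y \<noteq> 0" using seg by auto
  then obtain \<delta>x \<delta>y where "0 < \<delta>x" "0 < \<delta>y"
    and \<delta>x: "\<And>p. dist p x < \<delta>x \<Longrightarrow> dist (stretch T p) (stretch T x) < e / 3"
    and \<delta>y: "\<And>q. dist q y < \<delta>y \<Longrightarrow> dist (stretch T q) (stretch T y) < e / 3"
    using continuous_at_stretch[OF T] e unfolding continuous_at_eps_delta by metis
  then have "0 < min (min \<delta>x \<delta>y) (e / 3)" using e by simp
  then obtain p where p: "dist p x < min (min \<delta>x \<delta>y) (e / 3)"
    "stretch T p - min (min \<delta>x \<delta>y) (e / 3) \<le> stretch T (p + (y - x))"
    by (rule stretch_almost_increasing[OF T S pres seg])
  have "dist (p + (y - x)) y = dist p x" by (simp add: dist_norm algebra_simps)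
  then have "dist (stretch T p) (stretch T x) < e / 3"
    "dist (stretch T (p + (y - x))) (stretch T y) < e / 3"
    using p(1) \<delta>x[of p] \<delta>y[of "p + (y - x)"] by auto
  moreover have "min (min \<delta>x \<delta>y) (e / 3) \<le> e / 3" by simp
  ultimately show "stretch T x \<le> stretch T y + e"
    using p(2) unfolding dist_real_def by linarith
qed

lemma stretch_constant:
  fixes T :: "'a::banach \<Rightarrow> 'b::real_normed_vector"
  assumes T: "bounded_linear T" and S: "gdelta_in euclidean S" "closure S = UNIV"
    and pres: "\<forall>z\<in>S. preserves_bj_at T z" and "x \<noteq> 0" "y \<noteq> 0"
  shows "stretch T x = stretch T y"
proof (cases "0 \<in> closed_segment x y")
  case True
  then obtain u where u: "u *\<^sub>R y = - ((1 - u) *\<^sub>R x)"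
    unfolding in_segment by (metis add_eq_0_iff)
  then have "u \<noteq> 0" "u \<noteq> 1" using assms(5,6) by auto
  have "y = (1 / u) *\<^sub>R (u *\<^sub>R y)" using \<open>u \<noteq> 0\<close> by simp
  also have "\<dots> = ((u - 1) / u) *\<^sub>R x"
    using u by (simp add: minus_divide_left[symmetric] scaleR_minus_left[symmetric])
  finally show ?thesis
    using stretch_scaleR[OF bounded_linear.linear[OF T]] \<open>u \<noteq> 0\<close> \<open>u \<noteq> 1\<close> by simp
next
  case False
  then have "0 \<notin> closed_segment y x" by (simp add: closed_segment_commute)
  with False show ?thesis using stretch_mono_on_segment[OF T S pres] by (meson order_antisym)
qed

theorem scalar_isometry_if_preserves_bj_on_dense_gdelta:
  fixes T :: "'a::banach \<Rightarrow> 'b::real_normed_vector"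
  assumes T: "bounded_linear T" and S: "gdelta_in euclidean S" "closure S = UNIV"
    and pres: "\<forall>z\<in>S. preserves_bj_at T z"
  shows "\<exists>c. \<forall>x. norm (T x) = c * norm x"
proof (cases "\<exists>x0::'a. x0 \<noteq> 0")
  case True
  then obtain x0 :: 'a where "x0 \<noteq> 0" by blast
  then have "norm (T x) = stretch T x0 * norm x" for x
    using stretch_constant[OF T S pres, of x x0] linear_0[OF bounded_linear.linear[OF T]]
    by (cases "x = 0") (auto simp: stretch_def field_simps)
  then show ?thesis by blast
next
  case False
  then have "norm (T x) = 0 * norm x" for x
    using linear_0[OF bounded_linear.linear[OF T]] by (metis mult_zero_left norm_zero)
  then show ?thesis by blast
qed

section \<open>Preservation on dense sets and on hyperplanes\<close>

lemma closed_bj_orth: "closed {(u, v). bj_orth u v}"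
proof -
  have "{(u, v). bj_orth u v} = (\<Inter>l. {z. norm (fst z) \<le> norm (fst z + l *\<^sub>R snd z)})"
    by (auto simp: bj_orth_def)
  also have "closed \<dots>" by (intro closed_INT ballI closed_Collect_le continuous_intros)
  finally show ?thesis .
qed

lemma supp_funcs_near_smooth_point:
  assumes x: "x \<in> smooth_points" and f: "f \<in> supp_funcs x" and e: "0 < e"
  obtains \<delta> where "0 < \<delta>" "\<And>u g. dist u x < \<delta> \<Longrightarrow> g \<in> supp_funcs u \<Longrightarrow> \<bar>g v - f v\<bar> < e"
proof -
  obtain t where t: "0 < t" "norm_slope x v t < f v + e / 2"
    using norm_deriv_right_approx[of "e / 2" x v] e smooth_point_norm_derivs[OF x f] by auto
  obtain s where s: "s < 0" "f v - e / 2 < norm_slope x v s"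
    using norm_deriv_left_approx[of "e / 2" x v] e smooth_point_norm_derivs[OF x f] by auto
  show thesis
  proof
    show "0 < min (t * e / 4) (- s * e / 4)" using t s e by (simp add: mult_neg_pos)
    fix u g assume u: "dist u x < min (t * e / 4) (- s * e / 4)" and g: "g \<in> supp_funcs u"
    have "2 * norm (u - x) / \<bar>t\<bar> < e / 2" "2 * norm (u - x) / \<bar>s\<bar> < e / 2"
      using u t(1) s(1) by (simp_all add: dist_norm field_simps)
    then have "norm_slope u v t < norm_slope x v t + e / 2" "norm_slope x v s - e / 2 < norm_slope u v s"
      using norm_slope_dist[of u v t x] norm_slope_dist[of u v s x] by linarith+
    then show "\<bar>g v - f v\<bar> < e"
      using supp_func_bounds_norm_slope[OF g, of t v] supp_func_bounds_norm_slope[OF g, of s v] t s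
      by linarith
  qed
qed

lemma preserves_bj_at_smooth_point_if_dense:
  assumes T: "bounded_linear T" and U: "closure U = UNIV" "\<forall>u\<in>U. preserves_bj_at T u"
    and x: "x \<in> smooth_points"
  shows "preserves_bj_at T x"
  unfolding preserves_bj_at_def
proof (intro allI impI)
  fix v assume "bj_orth x v"
  have x0: "x \<noteq> 0" using x by (simp add: smooth_points_def)
  then obtain f where f: "f \<in> supp_funcs x" by (rule supp_funcs_nonempty)
  have fv: "f v = 0" using smooth_point_bj_orth_iff[OF x f] \<open>bj_orth x v\<close> by simp
  \<comment> \<open>approximate \<open>(x, v)\<close> by pairs \<open>(u, w)\<close> with \<open>u \<in> U\<close> and \<open>w\<close> in the kernel of a
     supporting functional at \<open>u\<close>\<close>
  define P where "P = (\<lambda>(u, w). (T u, T w)) -` {(a, b). bj_orth a b}"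
  have "closed P" unfolding P_def
    by (intro continuous_closed_vimage closed_bj_orth)
      (auto simp: case_prod_beta' intro!: continuous_intros bounded_linear.continuous[OF T])
  moreover have "\<exists>z\<in>P. dist z (x, v) < e" if e: "0 < e" for e
  proof -
    obtain \<delta> where \<delta>: "0 < \<delta>" "\<And>u g. dist u x < \<delta> \<Longrightarrow> g \<in> supp_funcs u \<Longrightarrow> \<bar>g v\<bar> < e / 2"
      using supp_funcs_near_smooth_point[OF x f, of "e / 2" v] e fv by auto
    have "x \<in> closure U" using U(1) by simp
    moreover have "0 < min \<delta> (min (e / 2) (norm x))" using \<delta>(1) e x0 by simp
    ultimately obtain u where u: "u \<in> U" "dist u x < min \<delta> (min (e / 2) (norm x))"
      unfolding closure_approachable by blast
    then have u0: "u \<noteq> 0" by auto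
    then obtain g where g: "g \<in> supp_funcs u" by (rule supp_funcs_nonempty)
    interpret g: bounded_linear g using supp_funcsD(1)[OF g] .
    define w where "w = v - (g v / norm u) *\<^sub>R u"
    have "g w = 0" using u0 supp_funcsD(3)[OF g] by (simp add: w_def g.diff g.scale)
    then have "bj_orth (T u) (T w)" using bj_orth_if_supp_func_eq_0[OF g] U(2) u(1)
      by (auto simp: preserves_bj_at_def)
    moreover have "dist (u, w) (x, v) \<le> dist u x + dist w v"
      by (simp add: dist_Pair_Pair sqrt_sum_squares_le_sum)
    moreover have "dist w v < e / 2" using \<delta>(2)[OF _ g] u u0 by (simp add: w_def dist_norm)
    ultimately show ?thesis using u by (intro bexI[of _ "(u, w)"]) (auto simp: P_def)
  qed
  ultimately have "(x, v) \<in> P" by (meson closed_approachable)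
  then show "bj_orth (T x) (T v)" by (simp add: P_def)
qed

lemma bj_orth_scaleR_left: "a \<noteq> 0 \<Longrightarrow> bj_orth (a *\<^sub>R u) v \<longleftrightarrow> bj_orth u v"
proof -
  assume a: "a \<noteq> 0"
  have "a *\<^sub>R u + l *\<^sub>R v = a *\<^sub>R (u + (l / a) *\<^sub>R v)" for l using a by (simp add: algebra_simps)
  then have "norm (a *\<^sub>R u) \<le> norm (a *\<^sub>R u + l *\<^sub>R v) \<longleftrightarrow> norm u \<le> norm (u + (l / a) *\<^sub>R v)" for l
    using a by simp
  then show ?thesis unfolding bj_orth_def using a by (metis nonzero_mult_div_cancel_left)
qed

lemma preserves_bj_at_scaleR:
  "linear T \<Longrightarrow> a \<noteq> 0 \<Longrightarrow> preserves_bj_at T (a *\<^sub>R x) \<longleftrightarrow> preserves_bj_at T x"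
  by (simp add: preserves_bj_at_def bj_orth_scaleR_left linear_scale)

lemma closure_nonvanishing_linear:
  fixes \<phi> :: "'a::real_normed_vector \<Rightarrow> real"
  assumes "linear \<phi>" "\<phi> \<noteq> (\<lambda>x. 0)"
  shows "closure {x. \<phi> x \<noteq> 0} = UNIV"
proof -
  obtain z where z: "\<phi> z \<noteq> 0" using assms(2) by auto
  have "\<exists>y\<in>{x. \<phi> x \<noteq> 0}. dist y x < e" if "0 < e" for x e
  proof (cases "\<phi> x = 0")
    case True
    define k where "k = e / (norm z + 1)"
    have z1: "0 < norm z + 1" using norm_ge_zero[of z] by linarith
    then have k0: "0 < k" using that by (simp add: k_def)
    then have "k * norm z < k * (norm z + 1)" by simp
    also have "\<dots> = e" using z1 by (simp add: k_def)
    finally have k: "0 < k" "k * norm z < e" using k0 by auto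
    have "\<phi> (x + k *\<^sub>R z) \<noteq> 0" using True z k(1) assms(1) by (simp add: linear_add linear_scale)
    moreover have "dist (x + k *\<^sub>R z) x < e" using k by (simp add: dist_norm)
    ultimately show ?thesis by blast
  qed (use that in auto)
  then show ?thesis by (auto simp: closure_approachable)
qed

lemma preserves_bj_dense_if_hyperplane:
  assumes T: "linear T" and H: "affine_hyperplane_off0 H" "\<forall>x\<in>H. preserves_bj_at T x"
  shows "\<exists>U. closure U = UNIV \<and> (\<forall>x\<in>U. preserves_bj_at T x)"
proof -
  obtain \<phi> c where \<phi>: "bounded_linear \<phi>" "\<phi> \<noteq> (\<lambda>x. 0)"
    and c: "c \<noteq> (0::real)" and H_eq: "H = {x. \<phi> x = c}"
    using H(1) unfolding affine_hyperplane_off0_def by blast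
  show ?thesis
  proof (intro exI conjI ballI)
    show "closure {x. \<phi> x \<noteq> 0} = UNIV"
      using closure_nonvanishing_linear \<phi> bounded_linear.linear by blast
    fix x assume "x \<in> {x. \<phi> x \<noteq> 0}"
    then have "(c / \<phi> x) *\<^sub>R x \<in> H" "c / \<phi> x \<noteq> 0"
      using c bounded_linear.linear[OF \<phi>(1)] by (simp_all add: H_eq linear_scale)
    then show "preserves_bj_at T x" using H(2) preserves_bj_at_scaleR[OF T] by blast
  qed
qed

lemma affine_hyperplane_off0_exists:
  fixes x :: "'a::real_normed_vector"
  assumes "x \<noteq> 0"
  shows "\<exists>H::'a set. affine_hyperplane_off0 H"
proof -
  obtain f where f: "f \<in> supp_funcs x" using assms by (rule supp_funcs_nonempty)
  then have "f \<noteq> (\<lambda>x. 0)" "norm x \<noteq> 0" using supp_funcsD(3)[OF f] assms by auto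
  then have "affine_hyperplane_off0 {y. f y = norm x}"
    using supp_funcsD(1)[OF f] unfolding affine_hyperplane_off0_def by blast
  then show ?thesis by blast
qed

theorem mainTheorem9:
  fixes T :: "'a::banach \<Rightarrow> 'a"
  assumes dense_sm: "closure (smooth_points :: 'a set) = UNIV"
    and gdelta_sm: "gdelta_in euclidean (smooth_points :: 'a set)"
    and lin: "bounded_linear T"
    and nz: "T \<noteq> (\<lambda>x. 0)"
  shows
   "((\<forall>x\<in>smooth_points. preserves_bj_at T x) \<longleftrightarrow>
       (\<exists>U. closure U = UNIV \<and> (\<forall>x\<in>U. preserves_bj_at T x)))
  \<and> ((\<forall>x\<in>smooth_points. preserves_bj_at T x) \<longleftrightarrow>
       (\<exists>H. affine_hyperplane_off0 H \<and> (\<forall>x\<in>H. preserves_bj_at T x)))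
  \<and> ((\<forall>x\<in>smooth_points. preserves_bj_at T x) \<longleftrightarrow>
       (\<forall>x\<in>smooth_points. preserves_rho_plus_at T x))
  \<and> ((\<forall>x\<in>smooth_points. preserves_bj_at T x) \<longleftrightarrow>
       (\<forall>x\<in>smooth_points. preserves_rho_minus_at T x))
  \<and> ((\<forall>x\<in>smooth_points. preserves_bj_at T x) \<longleftrightarrow>
       (\<forall>x\<in>smooth_points. preserves_rho_at T x))
  \<and> ((\<forall>x\<in>smooth_points. preserves_bj_at T x) \<longleftrightarrow>
       (\<exists>c::real. \<forall>x. norm (T x) = c * norm x))"
proof -
  have T: "linear T" using lin by (rule bounded_linear.linear)
  obtain z where "T z \<noteq> 0" using nz by auto
  then have "z \<noteq> 0" using linear_0[OF T] by auto
  then obtain H :: "'a set" where H: "affine_hyperplane_off0 H" by (metis affine_hyperplane_off0_exists)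
  have isometry: "\<exists>c::real. \<forall>x. norm (T x) = c * norm x"
    if "\<forall>x\<in>smooth_points. preserves_bj_at T x"
    using scalar_isometry_if_preserves_bj_on_dense_gdelta[OF lin gdelta_sm dense_sm that] .
  have preserves_all: "\<forall>x. preserves_bj_at T x \<and> preserves_rho_plus_at T x \<and>
      preserves_rho_minus_at T x \<and> preserves_rho_at T x"
    if c: "\<forall>x. norm (T x) = c * norm x" for c
    using c scalar_isometry_nonneg[OF nz, of c] preserves_bj_at_scalar_isometry[OF T, of c]
      preserves_rho_at_scalar_isometry[OF T, of c] by blast
  have dense: "\<forall>x\<in>smooth_points. preserves_bj_at T x"
    if "closure U = UNIV" "\<forall>x\<in>U. preserves_bj_at T x" for U
    using preserves_bj_at_smooth_point_if_dense[OF lin that] by blast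
  show ?thesis
    apply (intro conjI)
    subgoal using isometry preserves_all dense closure_UNIV by (metis UNIV_I)
    subgoal using isometry preserves_all H dense preserves_bj_dense_if_hyperplane[OF T] by blast
    subgoal using isometry preserves_all preserves_bj_at_smooth_point_if_preserves_rho(1) by blast
    subgoal using isometry preserves_all preserves_bj_at_smooth_point_if_preserves_rho(2) by blast
    subgoal using isometry preserves_all preserves_bj_at_smooth_point_if_preserves_rho(3) by blast
    subgoal using isometry preserves_all by blast
    done
qed

end
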